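(* Let $\epsilon=1/50$, let $v\ge 1$, and let $t\in\{0,1\}^v$. Suppose that for every $s\in\{0,1\}^v$ we are given a bit $b_s$ satisfying $b_s=1$ if $\langle s,t\rangle/v>\epsilon$ and $b_s=0$ if $\langle s,t\rangle/v<\epsilon/2$. Let $t'\in\{0,1\}^v$ be any vector consistent with all the $b_s$, in the sense that $\langle s,t'\rangle/v>\epsilon$ for all $s$ with $b_s=1$ and $\langle s,t'\rangle/v<\epsilon/2$ for all $s$ with $b_s=0$. Then the Hamming distance between $t$ and $t'$ is at most $v/25$.
   Context: $\langle s,t\rangle=\sum_{i=1}^v s_it_i$ is the standard inner product. *)

theory Defs
  imports Main Complex_Main
begin

definition binvecs :: "nat \<Rightarrow> nat list set" where
  "binvecs v = {xs. length xs = v \<and> set xs \<subseteq> {0, 1}}"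

definition inner_bin :: "nat \<Rightarrow> nat list \<Rightarrow> nat list \<Rightarrow> real" where
  "inner_bin v s t = (\<Sum>i<v. real (s ! i) * real (t ! i))"

definition hamming :: "nat \<Rightarrow> nat list \<Rightarrow> nat list \<Rightarrow> nat" where
  "hamming v s t = card {i. i < v \<and> s ! i \<noteq> t ! i}"

end

theory Submission
  imports Defs
begin

text \<open>Let \<open>A\<close> be the coordinates where \<open>t\<close> is 1 and \<open>t'\<close> is 0, and \<open>B\<close> those where \<open>t\<close> is 0 and
  \<open>t'\<close> is 1, so the Hamming distance is \<open>|A| + |B|\<close>. Query the indicator vector of \<open>A\<close>: its
  inner product with \<open>t'\<close> is 0, so consistency forbids \<open>b = 1\<close>, which forces \<open>|A| \<le> \<epsilon> v\<close>.
  Query the indicator vector of \<open>B\<close>: its inner product with \<open>t\<close> is 0, so \<open>b = 0\<close> and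
  consistency gives \<open>|B| < \<epsilon> v / 2\<close>. Hence the distance is at most \<open>3 \<epsilon> v / 2 \<le> v / 25\<close>.\<close>

definition indicator_vec :: "nat \<Rightarrow> (nat \<Rightarrow> bool) \<Rightarrow> nat list" where
  "indicator_vec v P = map (\<lambda>i. if P i then 1 else 0) [0..<v]"

lemma indicator_vec_binvecs: "indicator_vec v P \<in> binvecs v"
  by (auto simp: indicator_vec_def binvecs_def)

lemma binvecs_nth: "u \<in> binvecs v \<Longrightarrow> i < v \<Longrightarrow> u ! i = 0 \<or> u ! i = 1"
  unfolding binvecs_def using nth_mem by fastforce

lemma inner_bin_indicator_vec:
  "inner_bin v (indicator_vec v P) u = (\<Sum>i\<in>{i. i < v \<and> P i}. real (u ! i))"
proof -
  have "inner_bin v (indicator_vec v P) u = (\<Sum>i<v. if P i then real (u ! i) else 0)"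
    unfolding inner_bin_def indicator_vec_def by (rule sum.cong) auto
  also have "\<dots> = (\<Sum>i\<in>{i. i < v \<and> P i}. real (u ! i))"
    by (simp add: sum.If_cases lessThan_def Collect_conj_eq Int_commute)
  finally show ?thesis .
qed

lemma inner_bin_indicator_vec_ones:
  assumes "\<And>i. P i \<Longrightarrow> u ! i = 1"
  shows "inner_bin v (indicator_vec v P) u = real (card {i. i < v \<and> P i})"
  unfolding inner_bin_indicator_vec by (simp add: assms)

lemma inner_bin_indicator_vec_zeros:
  assumes "\<And>i. P i \<Longrightarrow> u ! i = 0"
  shows "inner_bin v (indicator_vec v P) u = 0"
  unfolding inner_bin_indicator_vec by (simp add: assms)

lemma hamming_binvecs:
  assumes "t \<in> binvecs v" "t' \<in> binvecs v"
  shows "hamming v t t' =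
    card {i. i < v \<and> t ! i = 1 \<and> t' ! i = 0} + card {i. i < v \<and> t ! i = 0 \<and> t' ! i = 1}"
proof -
  have "{i. i < v \<and> t ! i \<noteq> t' ! i} =
      {i. i < v \<and> t ! i = 1 \<and> t' ! i = 0} \<union> {i. i < v \<and> t ! i = 0 \<and> t' ! i = 1}"
    using binvecs_nth[OF assms(1)] binvecs_nth[OF assms(2)] by fastforce
  then show ?thesis
    unfolding hamming_def by (simp add: card_Un_disjoint disjoint_iff)
qed

theorem lemma3:
  fixes v :: nat and t t' :: "nat list" and b :: "nat list \<Rightarrow> bool" and \<epsilon> :: real
  assumes eps: "\<epsilon> = 1/50"
    and v: "v \<ge> 1"
    and t: "t \<in> binvecs v"
    and t': "t' \<in> binvecs v"
    and b1: "\<forall>s\<in>binvecs v. inner_bin v s t / real v > \<epsilon> \<longrightarrow> b s"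
    and b0: "\<forall>s\<in>binvecs v. inner_bin v s t / real v < \<epsilon> / 2 \<longrightarrow> \<not> b s"
    and c1: "\<forall>s\<in>binvecs v. b s \<longrightarrow> inner_bin v s t' / real v > \<epsilon>"
    and c0: "\<forall>s\<in>binvecs v. \<not> b s \<longrightarrow> inner_bin v s t' / real v < \<epsilon> / 2"
  shows "real (hamming v t t') \<le> real v / 25"
proof -
  define PA where "PA i \<longleftrightarrow> t ! i = 1 \<and> t' ! i = 0" for i
  define PB where "PB i \<longleftrightarrow> t ! i = 0 \<and> t' ! i = 1" for i
  let ?sA = "indicator_vec v PA" and ?sB = "indicator_vec v PB"
  have "inner_bin v ?sA t' = 0"
    by (rule inner_bin_indicator_vec_zeros) (simp add: PA_def)
  then have "\<not> b ?sA"
    using c1 indicator_vec_binvecs eps by fastforce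
  then have "\<not> inner_bin v ?sA t / real v > \<epsilon>"
    using b1 indicator_vec_binvecs by blast
  moreover have "inner_bin v ?sA t = real (card {i. i < v \<and> PA i})"
    by (rule inner_bin_indicator_vec_ones) (simp add: PA_def)
  ultimately have A: "real (card {i. i < v \<and> PA i}) \<le> real v / 50"
    using v eps by (simp add: field_simps)
  have "inner_bin v ?sB t = 0"
    by (rule inner_bin_indicator_vec_zeros) (simp add: PB_def)
  then have "inner_bin v ?sB t' / real v < \<epsilon> / 2"
    using b0 c0 indicator_vec_binvecs eps by fastforce
  moreover have "inner_bin v ?sB t' = real (card {i. i < v \<and> PB i})"
    by (rule inner_bin_indicator_vec_ones) (simp add: PB_def)
  ultimately have B: "real (card {i. i < v \<and> PB i}) \<le> real v / 100"
    using v eps by (simp add: field_simps)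
  show ?thesis
    using hamming_binvecs[OF t t'] A B unfolding PA_def PB_def by simp
qed

end
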